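(* Let $p$ and $q$ be positive integers, let $m_1<m_2<\cdots<m_q$ be positive integers and let $v_1,\dots,v_q$ be positive integers. Let $A_n$ be the number of ways to tile an $n$-board using $v_i$ colours of $(1/p,1-1/p;m_i)$-combs for $i=1,\ldots,q$. Define $s_n$ by $s_n=v_1s_{n-m_1}+\cdots+v_qs_{n-m_q}+\delta_{n,0}$ for $n\ge0$ and $s_n=0$ for $n<0$. Then for all $n\ge 0$, $A_n=s_n^p$.
   Context: An $n$-board is the strip $[0,n]\times[0,1]$ divided into $n$ unit square cells. A $(w,g;m)$-comb is a tile consisting of a row of $m$ rectangles (teeth) of size $w\times 1$, consecutive teeth separated by a gap of width $g$; the gaps are not part of the tile and may be occupied by other tiles. A tiling of a board is a placement of translated (unrotated) copies of tiles so that the teeth cover the board exactly with no overlaps; tiles of the same shape but different colours are distinguished. $\delta_{i,j}$ equals $1$ if $i=j$ and $0$ otherwise. *)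

theory Defs
  imports Main
begin

text \<open>Discrete model: the n-board is cut into n*p subcells of width 1/p, numbered
 0..n*p-1 (subcell x is [x/p,(x+1)/p]). A (1/p,1-1/p;m)-comb whose leftmost tooth
 occupies subcell j covers the subcells j, j+p, ..., j+(m-1)p.
 A placed tile is a triple (j, i, c): start subcell j, comb type i < q (0-based),
 colour c < v i.\<close>

definition comb_cells :: "nat \<Rightarrow> nat \<Rightarrow> nat \<Rightarrow> nat set" where
  "comb_cells p m j = {j + k * p | k. k < m}"

definition comb_tilings ::
  "nat \<Rightarrow> nat \<Rightarrow> (nat \<Rightarrow> nat) \<Rightarrow> (nat \<Rightarrow> nat) \<Rightarrow> nat \<Rightarrow> (nat \<times> nat \<times> nat) set set" where
  "comb_tilings p q m v n =
     {T. (\<forall>(j, i, c) \<in> T. i < q \<and> c < v i \<and> comb_cells p (m i) j \<subseteq> {0..<n * p})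
       \<and> (\<forall>x < n * p. \<exists>!t \<in> T. (case t of (j, i, c) \<Rightarrow> x \<in> comb_cells p (m i) j))}"

end

theory Submission
  imports Defs "HOL-Library.FuncSet" "HOL-Library.Disjoint_Sets"
begin

text \<open>Cut every unit cell into \<open>p\<close> subcells of width \<open>1/p\<close>. A comb with teeth of width \<open>1/p\<close>
  and gaps of width \<open>1 - 1/p\<close> occupies the subcells \<open>j, j + p, j + 2p, \<dots>\<close>, all in one residue
  class mod \<open>p\<close>. Hence a tiling of the \<open>n\<close>-board is the same as \<open>p\<close> independent tilings, one of
  each residue class, and each residue class is a copy of the board in which an \<open>m\<^sub>i\<close>-comb is
  just a bar of \<open>m\<^sub>i\<close> consecutive cells. Such bar tilings are counted by \<open>s\<^sub>n\<close>: the tile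
  covering the leftmost cell starts there, and removing it leaves a bar tiling of the rest.\<close>

section \<open>Exact covers\<close>

definition exact_covers :: "('t \<Rightarrow> 'a set) \<Rightarrow> 't set \<Rightarrow> 'a set \<Rightarrow> 't set set" where
  "exact_covers cells S X =
     {T. T \<subseteq> S \<and> (\<forall>t\<in>T. cells t \<subseteq> X) \<and> (\<forall>x\<in>X. \<exists>!t\<in>T. x \<in> cells t)}"

lemma exact_coversI:
  assumes "T \<subseteq> S" "\<And>t. t \<in> T \<Longrightarrow> cells t \<subseteq> X" "\<And>x. x \<in> X \<Longrightarrow> \<exists>!t\<in>T. x \<in> cells t"
  shows "T \<in> exact_covers cells S X"
  using assms unfolding exact_covers_def by blast

lemma exact_coversD:
  assumes "T \<in> exact_covers cells S X"
  shows "T \<subseteq> S" "t \<in> T \<Longrightarrow> cells t \<subseteq> X" "x \<in> X \<Longrightarrow> \<exists>!t\<in>T. x \<in> cells t"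
  using assms unfolding exact_covers_def by blast+

lemma exact_covers_empty:
  assumes "\<forall>t\<in>S. cells t \<noteq> {}"
  shows "exact_covers cells S {} = {{}}"
  using assms by (auto simp: exact_covers_def)

lemma finite_exact_covers:
  assumes "finite {t\<in>S. cells t \<subseteq> X}"
  shows "finite (exact_covers cells S X)"
proof (rule finite_subset)
  show "exact_covers cells S X \<subseteq> Pow {t\<in>S. cells t \<subseteq> X}"
    by (auto simp: exact_covers_def)
qed (use assms in simp)

lemma exact_covers_disjoint:
  assumes "T \<in> exact_covers cells S X" "t \<in> T" "u \<in> T" "t \<noteq> u"
  shows "cells t \<inter> cells u = {}"
proof -
  have "x \<notin> X" if "x \<in> cells t" "x \<in> cells u" for x
    using assms that unfolding exact_covers_def by blast
  then show ?thesis using assms unfolding exact_covers_def by blast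
qed

lemma exact_covers_decompose_at_cell:
  assumes "x \<in> X"
  shows "exact_covers cells S X =
    (\<Union>t\<in>{t\<in>S. x \<in> cells t \<and> cells t \<subseteq> X}. insert t ` exact_covers cells S (X - cells t))"
proof (intro equalityI subsetI)
  fix T assume T: "T \<in> exact_covers cells S X"
  then obtain t where t: "t \<in> T" "x \<in> cells t" using \<open>x \<in> X\<close> by (auto simp: exact_covers_def)
  have "T - {t} \<in> exact_covers cells S (X - cells t)"
  proof -
    have "cells u \<inter> cells t = {}" if "u \<in> T" "u \<noteq> t" for u
      using exact_covers_disjoint[OF T] that t(1) by blast
    then show ?thesis using T by (auto simp: exact_covers_def)
  qed
  moreover have "t \<in> S" "cells t \<subseteq> X" using T t by (auto simp: exact_covers_def)
  ultimately show "T \<in> (\<Union>t\<in>{t\<in>S. x \<in> cells t \<and> cells t \<subseteq> X}. insert t ` exact_covers cells S (X - cells t))"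
    using t by (auto intro!: bexI[of _ t] image_eqI[of _ _ "T - {t}"])
next
  fix T assume "T \<in> (\<Union>t\<in>{t\<in>S. x \<in> cells t \<and> cells t \<subseteq> X}. insert t ` exact_covers cells S (X - cells t))"
  then obtain t T' where t: "t \<in> S" "x \<in> cells t" "cells t \<subseteq> X"
    and T': "T' \<in> exact_covers cells S (X - cells t)" and T: "T = insert t T'" by auto
  have "\<exists>!u\<in>insert t T'. y \<in> cells u" if "y \<in> X" for y
  proof (cases "y \<in> cells t")
    case True
    then show ?thesis using T' by (auto simp: exact_covers_def)
  next
    case False
    then have "\<exists>!u\<in>T'. y \<in> cells u" using T' that by (auto simp: exact_covers_def)
    then show ?thesis using False by blast
  qed
  then show "T \<in> exact_covers cells S X"
    unfolding T using t T' by (auto simp: exact_covers_def)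
qed

lemma card_exact_covers_decompose_at_cell:
  assumes nonempty: "\<forall>t\<in>S. cells t \<noteq> {}" and x: "x \<in> X"
    and fin: "finite {t\<in>S. cells t \<subseteq> X}"
  shows "card (exact_covers cells S X) =
    (\<Sum>t\<in>{t\<in>S. x \<in> cells t \<and> cells t \<subseteq> X}. card (exact_covers cells S (X - cells t)))"
proof -
  let ?A = "{t\<in>S. x \<in> cells t \<and> cells t \<subseteq> X}"
  have fin_sub: "finite (exact_covers cells S (X - cells t))" for t
    by (rule finite_exact_covers, rule finite_subset[OF _ fin]) blast
  have not_mem: "t \<notin> T" if "t \<in> ?A" "T \<in> exact_covers cells S (X - cells t)" for t T
  proof
    assume "t \<in> T"
    then have "cells t \<subseteq> X - cells t" using that(2) unfolding exact_covers_def by blast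
    moreover have "cells t \<noteq> {}" using that(1) nonempty by blast
    ultimately show False by blast
  qed
  have "card (exact_covers cells S X) = (\<Sum>t\<in>?A. card (insert t ` exact_covers cells S (X - cells t)))"
    unfolding exact_covers_decompose_at_cell[OF x]
  proof (rule card_UN_disjoint)
    show "finite ?A" by (rule finite_subset[OF _ fin]) auto
    show "\<forall>t\<in>?A. finite (insert t ` exact_covers cells S (X - cells t))"
      using fin_sub by blast
    show "\<forall>t\<in>?A. \<forall>u\<in>?A. t \<noteq> u \<longrightarrow>
        insert t ` exact_covers cells S (X - cells t) \<inter> insert u ` exact_covers cells S (X - cells u) = {}"
    proof (intro ballI impI)
      fix t u assume t: "t \<in> ?A" and u: "u \<in> ?A" and "t \<noteq> u"
      have "u \<notin> T" if "T \<in> exact_covers cells S (X - cells t)" for T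
        using that t u unfolding exact_covers_def by blast
      moreover have "u \<in> insert t T" if "insert t T = insert u T'" for T T'
        using that by blast
      ultimately show "insert t ` exact_covers cells S (X - cells t) \<inter>
          insert u ` exact_covers cells S (X - cells u) = {}"
        using \<open>t \<noteq> u\<close> by fastforce
    qed
  qed
  also have "\<dots> = (\<Sum>t\<in>?A. card (exact_covers cells S (X - cells t)))"
  proof (rule sum.cong[OF refl], rule card_image)
    fix t assume "t \<in> ?A"
    show "inj_on (insert t) (exact_covers cells S (X - cells t))"
      by (rule inj_onI) (metis insert_ident not_mem[OF \<open>t \<in> ?A\<close>])
  qed
  finally show ?thesis .
qed

context
  fixes Y :: "'r \<Rightarrow> 'a set" and R :: "'r set"
  assumes disj: "disjoint_family_on Y R"
begin

lemma disjoint_block_unique: "r \<in> R \<Longrightarrow> r' \<in> R \<Longrightarrow> y \<in> Y r \<Longrightarrow> y \<in> Y r' \<Longrightarrow> r' = r"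
  using disj unfolding disjoint_family_on_def by blast

lemma exact_cover_restrict_block:
  fixes cells :: "'t \<Rightarrow> 'a set"
  assumes T: "T \<in> exact_covers cells S (\<Union>r\<in>R. Y r)" and "r \<in> R"
    and local: "\<And>t. t \<in> T \<Longrightarrow> \<exists>r\<in>R. cells t \<subseteq> Y r"
  shows "{t\<in>T. cells t \<subseteq> Y r} \<in> exact_covers cells S (Y r)"
proof (rule exact_coversI)
  show "{t\<in>T. cells t \<subseteq> Y r} \<subseteq> S" using exact_coversD(1)[OF T] by blast
next
  fix y assume y: "y \<in> Y r"
  then obtain t where t: "t \<in> T" "y \<in> cells t" and uniq: "\<And>u. u \<in> T \<Longrightarrow> y \<in> cells u \<Longrightarrow> u = t"
    using exact_coversD(3)[OF T] \<open>r \<in> R\<close> by blast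
  obtain r' where "r' \<in> R" "cells t \<subseteq> Y r'" using local[OF t(1)] by blast
  with disjoint_block_unique[OF \<open>r \<in> R\<close>] t(2) y have "cells t \<subseteq> Y r" by blast
  then show "\<exists>!t\<in>{t\<in>T. cells t \<subseteq> Y r}. y \<in> cells t" using t uniq by blast
qed simp

lemma Union_exact_covers_of_blocks:
  fixes cells :: "'t \<Rightarrow> 'a set"
  assumes f: "f \<in> (\<Pi>\<^sub>E r\<in>R. exact_covers cells S (Y r))"
  shows "(\<Union>r\<in>R. f r) \<in> exact_covers cells S (\<Union>r\<in>R. Y r)"
proof (rule exact_coversI)
  note f_cover = PiE_mem[OF f]
  show "(\<Union>r\<in>R. f r) \<subseteq> S" using exact_coversD(1)[OF f_cover] by blast
  show "cells t \<subseteq> (\<Union>r\<in>R. Y r)" if "t \<in> (\<Union>r\<in>R. f r)" for t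
    using that exact_coversD(2)[OF f_cover] by blast
  fix x assume "x \<in> (\<Union>r\<in>R. Y r)"
  then obtain r where r: "r \<in> R" "x \<in> Y r" by blast
  obtain t where t: "t \<in> f r" "x \<in> cells t" and uniq: "\<And>u. u \<in> f r \<Longrightarrow> x \<in> cells u \<Longrightarrow> u = t"
    using exact_coversD(3)[OF f_cover[OF r(1)] r(2)] by blast
  have "u = t" if u: "u \<in> f r'" "r' \<in> R" "x \<in> cells u" for u r'
  proof -
    have "x \<in> Y r'" using exact_coversD(2)[OF f_cover[OF u(2)] u(1)] u(3) by blast
    then have "r' = r" using disjoint_block_unique[OF r(1) u(2) r(2)] by blast
    then show ?thesis using uniq u by blast
  qed
  then show "\<exists>!t\<in>(\<Union>r\<in>R. f r). x \<in> cells t" using t r(1) by blast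
qed

lemma restrict_Union_exact_covers_of_blocks:
  fixes cells :: "'t \<Rightarrow> 'a set"
  assumes f: "f \<in> (\<Pi>\<^sub>E r\<in>R. exact_covers cells S (Y r))" and "r \<in> R"
    and nonempty: "\<forall>t\<in>S. cells t \<noteq> {}"
  shows "{t \<in> (\<Union>r\<in>R. f r). cells t \<subseteq> Y r} = f r"
proof (intro equalityI subsetI)
  note f_cover = PiE_mem[OF f]
  fix t assume "t \<in> {t \<in> (\<Union>r\<in>R. f r). cells t \<subseteq> Y r}"
  then obtain r' where r': "r' \<in> R" "t \<in> f r'" and sub: "cells t \<subseteq> Y r" by blast
  have "t \<in> S" "cells t \<subseteq> Y r'" using exact_coversD(1,2)[OF f_cover[OF r'(1)]] r'(2) by blast+
  then obtain x where "x \<in> Y r" "x \<in> Y r'" using nonempty sub by blast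
  then have "r' = r" using disjoint_block_unique[OF \<open>r \<in> R\<close> r'(1)] by blast
  then show "t \<in> f r" using r' by simp
next
  fix t assume "t \<in> f r"
  then show "t \<in> {t \<in> (\<Union>r\<in>R. f r). cells t \<subseteq> Y r}"
    using exact_coversD(2)[OF PiE_mem[OF f \<open>r \<in> R\<close>]] \<open>r \<in> R\<close> by blast
qed

lemma card_exact_covers_partition:
  fixes cells :: "'t \<Rightarrow> 'a set"
  assumes "finite R" and nonempty: "\<forall>t\<in>S. cells t \<noteq> {}"
    and local: "\<And>t. t \<in> S \<Longrightarrow> cells t \<subseteq> (\<Union>r\<in>R. Y r) \<Longrightarrow> \<exists>r\<in>R. cells t \<subseteq> Y r"
  shows "card (exact_covers cells S (\<Union>r\<in>R. Y r)) = (\<Prod>r\<in>R. card (exact_covers cells S (Y r)))"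
proof -
  let ?covers = "exact_covers cells S (\<Union>r\<in>R. Y r)"
  define split where "split T = (\<lambda>r\<in>R. {t\<in>T. cells t \<subseteq> Y r})" for T
  have local_cover: "\<exists>r\<in>R. cells t \<subseteq> Y r" if "T \<in> ?covers" "t \<in> T" for T t
    using local exact_coversD(1,2)[OF that(1)] that(2) by blast
  have "bij_betw split ?covers (\<Pi>\<^sub>E r\<in>R. exact_covers cells S (Y r))"
  proof (rule bij_betw_byWitness[where f' = "\<lambda>f. \<Union>r\<in>R. f r"])
    show "\<forall>T\<in>?covers. (\<Union>r\<in>R. split T r) = T"
      using local_cover by (auto simp: split_def)
    show "\<forall>f\<in>\<Pi>\<^sub>E r\<in>R. exact_covers cells S (Y r). split (\<Union>r\<in>R. f r) = f"
    proof (intro ballI ext)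
      fix f r assume f: "f \<in> (\<Pi>\<^sub>E r\<in>R. exact_covers cells S (Y r))"
      show "split (\<Union>r\<in>R. f r) r = f r"
        using restrict_Union_exact_covers_of_blocks[OF f _ nonempty] PiE_arb[OF f]
        by (cases "r \<in> R") (simp_all add: split_def)
    qed
    show "split ` ?covers \<subseteq> (\<Pi>\<^sub>E r\<in>R. exact_covers cells S (Y r))"
    proof (intro subsetI, elim imageE)
      fix F T assume T: "T \<in> ?covers" and "F = split T"
      then show "F \<in> (\<Pi>\<^sub>E r\<in>R. exact_covers cells S (Y r))"
        using exact_cover_restrict_block[OF T _ local_cover[OF T]]
        by (simp add: split_def restrict_PiE_iff)
    qed
    show "(\<lambda>f. \<Union>r\<in>R. f r) ` (\<Pi>\<^sub>E r\<in>R. exact_covers cells S (Y r)) \<subseteq> ?covers"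
      using Union_exact_covers_of_blocks by blast
  qed
  then have "card ?covers = card (\<Pi>\<^sub>E r\<in>R. exact_covers cells S (Y r))"
    by (rule bij_betw_same_card)
  also have "\<dots> = (\<Prod>r\<in>R. card (exact_covers cells S (Y r)))"
    using \<open>finite R\<close> by (rule card_PiE)
  finally show ?thesis .
qed

end

section \<open>Comb tilings split into residue classes\<close>

definition residue_interval :: "nat \<Rightarrow> nat \<Rightarrow> nat \<Rightarrow> nat \<Rightarrow> nat set" where
  "residue_interval p r a b = {x. x mod p = r \<and> a \<le> x div p \<and> x div p < b}"

lemma comb_cells_eq_residue_interval:
  assumes "p > 0"
  shows "comb_cells p m j = residue_interval p (j mod p) (j div p) (j div p + m)"
proof (intro equalityI subsetI)
  fix x assume "x \<in> comb_cells p m j"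
  then show "x \<in> residue_interval p (j mod p) (j div p) (j div p + m)"
    using assms by (auto simp: comb_cells_def residue_interval_def)
next
  fix x assume x: "x \<in> residue_interval p (j mod p) (j div p) (j div p + m)"
  define k where "k = x div p - j div p"
  have k: "x div p = j div p + k" "k < m" using x unfolding k_def residue_interval_def by auto
  have "x = x div p * p + x mod p" by simp
  also have "\<dots> = (j div p * p + j mod p) + k * p"
    using k(1) x unfolding residue_interval_def by (simp add: algebra_simps)
  also have "\<dots> = j + k * p" by simp
  finally show "x \<in> comb_cells p m j" using k(2) unfolding comb_cells_def by blast
qed

definition comb_tiles :: "nat \<Rightarrow> (nat \<Rightarrow> nat) \<Rightarrow> (nat \<times> nat \<times> nat) set" where
  "comb_tiles q v = {(j, i, c). i < q \<and> c < v i}"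

definition comb_tile_cells :: "nat \<Rightarrow> (nat \<Rightarrow> nat) \<Rightarrow> nat \<times> nat \<times> nat \<Rightarrow> nat set" where
  "comb_tile_cells p m = (\<lambda>(j, i, c). comb_cells p (m i) j)"

lemma comb_tile_cells_eq:
  "p > 0 \<Longrightarrow> comb_tile_cells p m (j, i, c) = residue_interval p (j mod p) (j div p) (j div p + m i)"
  by (simp add: comb_tile_cells_def comb_cells_eq_residue_interval)

lemma start_mem_comb_tile_cells: "m i > 0 \<Longrightarrow> j \<in> comb_tile_cells p m (j, i, c)"
  unfolding comb_tile_cells_def comb_cells_def by force

lemma comb_tile_cells_nonempty:
  assumes "\<forall>i<q. m i > 0"
  shows "\<forall>t\<in>comb_tiles q v. comb_tile_cells p m t \<noteq> {}"
proof
  fix t assume "t \<in> comb_tiles q v"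
  then obtain j i c where "t = (j, i, c)" "i < q" by (auto simp: comb_tiles_def)
  then show "comb_tile_cells p m t \<noteq> {}"
    using start_mem_comb_tile_cells[of m i j p c] assms by auto
qed

lemma comb_tilings_eq_exact_covers:
  "comb_tilings p q m v n = exact_covers (comb_tile_cells p m) (comb_tiles q v) {0..<n * p}"
proof -
  have admissible: "(case t of (j, i, c) \<Rightarrow> i < q \<and> c < v i \<and> comb_cells p (m i) j \<subseteq> {0..<n * p})
      \<longleftrightarrow> t \<in> comb_tiles q v \<and> comb_tile_cells p m t \<subseteq> {0..<n * p}" for t
    by (cases t) (simp add: comb_tiles_def comb_tile_cells_def)
  have covers: "(case t of (j, i, c) \<Rightarrow> x \<in> comb_cells p (m i) j) \<longleftrightarrow> x \<in> comb_tile_cells p m t" for t x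
    by (cases t) (simp add: comb_tile_cells_def)
  show ?thesis
    unfolding comb_tilings_def exact_covers_def Ball_def admissible covers
    unfolding atLeast0LessThan lessThan_iff
    by (intro Collect_cong) blast
qed

lemma residue_classes_partition:
  assumes "p > 0"
  shows "{0..<n * p} = (\<Union>r<p. residue_interval p r 0 n)"
    and "disjoint_family_on (\<lambda>r. residue_interval p r 0 n) {..<p}"
  using assms by (auto simp: residue_interval_def disjoint_family_on_def div_less_iff_less_mult)

lemma comb_tile_cells_within_residue_class:
  assumes "p > 0" "comb_tile_cells p m t \<subseteq> {0..<n * p}"
  shows "comb_tile_cells p m t \<subseteq> residue_interval p (fst t mod p) 0 n"
  using assms
  by (cases t) (auto simp: comb_tile_cells_eq residue_interval_def div_less_iff_less_mult)

lemma card_comb_tilings_eq_prod_residue_classes: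
  assumes p: "p > 0" and m_pos: "\<forall>i<q. m i > 0"
  shows "card (comb_tilings p q m v n)
    = (\<Prod>r<p. card (exact_covers (comb_tile_cells p m) (comb_tiles q v) (residue_interval p r 0 n)))"
  unfolding comb_tilings_eq_exact_covers residue_classes_partition(1)[OF p]
proof (rule card_exact_covers_partition[OF residue_classes_partition(2)[OF p] _
      comb_tile_cells_nonempty[OF m_pos]])
  fix t assume "t \<in> comb_tiles q v" "comb_tile_cells p m t \<subseteq> (\<Union>r<p. residue_interval p r 0 n)"
  then have "comb_tile_cells p m t \<subseteq> residue_interval p (fst t mod p) 0 n"
    using comb_tile_cells_within_residue_class[OF p] residue_classes_partition(1)[OF p] by simp
  then show "\<exists>r\<in>{..<p}. comb_tile_cells p m t \<subseteq> residue_interval p r 0 n"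
    using p by auto
qed simp

section \<open>Counting the tilings of one residue class\<close>

lemma residue_interval_subset_iff:
  assumes "p > 0" "r < p" "a < b"
  shows "residue_interval p r a b \<subseteq> residue_interval p r' lo n \<longleftrightarrow> r' = r \<and> lo \<le> a \<and> b \<le> n"
proof
  assume sub: "residue_interval p r a b \<subseteq> residue_interval p r' lo n"
  have "a * p + r \<in> residue_interval p r a b" "(b - 1) * p + r \<in> residue_interval p r a b"
    using assms by (auto simp: residue_interval_def)
  then have "a * p + r \<in> residue_interval p r' lo n" "(b - 1) * p + r \<in> residue_interval p r' lo n"
    using sub by blast+
  then have "r = r'" "lo \<le> a" "b - 1 < n"
    using assms by (simp_all add: residue_interval_def)
  then show "r' = r \<and> lo \<le> a \<and> b \<le> n" by linarith
qed (auto simp: residue_interval_def)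

lemma residue_interval_diff:
  "lo \<le> k \<Longrightarrow> residue_interval p r lo n - residue_interval p r lo k = residue_interval p r k n"
  by (auto simp: residue_interval_def)

lemma finite_residue_interval: "p > 0 \<Longrightarrow> finite (residue_interval p r a b)"
  by (rule finite_subset[of _ "{..<b * p}"])
    (auto simp: residue_interval_def div_less_iff_less_mult)

lemma finite_comb_tiles_within:
  assumes "finite X" "\<forall>i<q. m i > 0"
  shows "finite {t \<in> comb_tiles q v. comb_tile_cells p m t \<subseteq> X}"
proof (rule finite_subset)
  show "{t \<in> comb_tiles q v. comb_tile_cells p m t \<subseteq> X} \<subseteq> X \<times> (SIGMA i:{..<q}. {..<v i})"
    using assms(2) start_mem_comb_tile_cells by (fastforce simp: comb_tiles_def)
qed (use assms(1) in auto)

lemma comb_tiles_covering_first_cell: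
  assumes "p > 0" "r < p" "\<forall>i<q. m i > 0"
  shows "{t \<in> comb_tiles q v. lo * p + r \<in> comb_tile_cells p m t
            \<and> comb_tile_cells p m t \<subseteq> residue_interval p r lo n}
       = (\<lambda>(i, c). (lo * p + r, i, c)) ` {(i, c). i < q \<and> c < v i \<and> lo + m i \<le> n}"
proof (intro set_eqI)
  fix t :: "nat \<times> nat \<times> nat"
  obtain j i c where t: "t = (j, i, c)" by (cases t)
  show "t \<in> {t \<in> comb_tiles q v. lo * p + r \<in> comb_tile_cells p m t
            \<and> comb_tile_cells p m t \<subseteq> residue_interval p r lo n}
      \<longleftrightarrow> t \<in> (\<lambda>(i, c). (lo * p + r, i, c)) ` {(i, c). i < q \<and> c < v i \<and> lo + m i \<le> n}"
  proof (cases "i < q \<and> c < v i")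
    case True
    have sub: "comb_tile_cells p m t \<subseteq> residue_interval p r lo n
        \<longleftrightarrow> r = j mod p \<and> lo \<le> j div p \<and> j div p + m i \<le> n"
      using residue_interval_subset_iff[of p "j mod p" "j div p" "j div p + m i" r lo n] assms True
      by (simp add: t comb_tile_cells_eq)
    have mem: "lo * p + r \<in> comb_tile_cells p m t \<longleftrightarrow> r = j mod p \<and> j div p \<le> lo \<and> lo < j div p + m i"
      using assms by (auto simp: t comb_tile_cells_eq residue_interval_def)
    have "r = j mod p \<and> j div p = lo \<longleftrightarrow> j = lo * p + r"
    proof
      assume "r = j mod p \<and> j div p = lo"
      then show "j = lo * p + r" using div_mult_mod_eq[of j p] by simp
    next
      assume "j = lo * p + r"
      then show "r = j mod p \<and> j div p = lo" using assms(1,2) by simp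
    qed
    moreover have "m i > 0" using assms(3) True by blast
    ultimately show ?thesis using sub mem True by (auto simp: t comb_tiles_def)
  next
    case False
    then show ?thesis by (auto simp: t comb_tiles_def)
  qed
qed

lemma recurrence_as_sum_over_pieces:
  fixes s :: "int \<Rightarrow> nat" and q :: nat and m v :: "nat \<Rightarrow> nat"
  assumes s_neg: "\<forall>n < 0. s n = 0"
    and s_rec: "\<forall>n \<ge> 0. s n = (\<Sum>i<q. v i * s (n - int (m i))) + (if n = 0 then 1 else 0)"
    and "lo < n"
  shows "(\<Sum>(i, c)\<in>{(i, c). i < q \<and> c < v i \<and> lo + m i \<le> n}. s (int (n - (lo + m i))))
    = s (int (n - lo))"
proof -
  define J where "J = {i. i < q \<and> lo + m i \<le> n}"
  have "finite J" unfolding J_def by simp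
  have pieces: "{(i, c). i < q \<and> c < v i \<and> lo + m i \<le> n} = (SIGMA i:J. {..<v i})"
    unfolding J_def by auto
  have "(\<Sum>(i, c)\<in>{(i, c). i < q \<and> c < v i \<and> lo + m i \<le> n}. s (int (n - (lo + m i))))
      = (\<Sum>i\<in>J. \<Sum>c<v i. s (int (n - (lo + m i))))"
    unfolding pieces by (rule sum.Sigma[symmetric]) (use \<open>finite J\<close> in auto)
  also have "\<dots> = (\<Sum>i\<in>J. v i * s (int (n - lo) - int (m i)))"
    by (rule sum.cong) (auto simp: J_def of_nat_diff algebra_simps)
  also have "\<dots> = (\<Sum>i<q. v i * s (int (n - lo) - int (m i)))"
  proof (rule sum.mono_neutral_left)
    show "\<forall>i\<in>{..<q} - J. v i * s (int (n - lo) - int (m i)) = 0"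
    proof
      fix i assume "i \<in> {..<q} - J"
      then have "int (n - lo) - int (m i) < 0" using \<open>lo < n\<close> by (auto simp: J_def)
      then show "v i * s (int (n - lo) - int (m i)) = 0" using s_neg by simp
    qed
  qed (auto simp: J_def)
  also have "\<dots> = s (int (n - lo))"
    using s_rec \<open>lo < n\<close> by simp
  finally show ?thesis .
qed

lemma recurrence_at_zero:
  fixes s :: "int \<Rightarrow> nat" and q :: nat and m v :: "nat \<Rightarrow> nat"
  assumes "\<forall>i<q. m i > 0" "\<forall>n < 0. s n = 0"
    and "\<forall>n \<ge> 0. s n = (\<Sum>i<q. v i * s (n - int (m i))) + (if n = 0 then 1 else 0)"
  shows "s 0 = 1"
proof -
  have "s 0 = (\<Sum>i<q. v i * s (- int (m i))) + 1"
    using assms(3)[rule_format, of 0] by simp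
  also have "(\<Sum>i<q. v i * s (- int (m i))) = 0"
    using assms(1,2) by simp
  finally show ?thesis by simp
qed

lemma card_comb_covers_residue_interval:
  fixes s :: "int \<Rightarrow> nat" and q :: nat and m v :: "nat \<Rightarrow> nat"
  assumes p: "p > 0" and r: "r < p" and m_pos: "\<forall>i<q. m i > 0"
    and s_neg: "\<forall>n < 0. s n = 0"
    and s_rec: "\<forall>n \<ge> 0. s n = (\<Sum>i<q. v i * s (n - int (m i))) + (if n = 0 then 1 else 0)"
  shows "lo \<le> n \<Longrightarrow> card (exact_covers (comb_tile_cells p m) (comb_tiles q v) (residue_interval p r lo n))
    = s (int (n - lo))"
proof (induction "n - lo" arbitrary: lo rule: less_induct)
  case less
  let ?covers = "exact_covers (comb_tile_cells p m) (comb_tiles q v)"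
  note nonempty = comb_tile_cells_nonempty[OF m_pos]
  show ?case
  proof (cases "lo = n")
    case True
    then have "residue_interval p r lo n = {}" by (simp add: residue_interval_def)
    then show ?thesis
      using exact_covers_empty[OF nonempty] recurrence_at_zero[OF m_pos s_neg s_rec] True by simp
  next
    case False
    then have "lo < n" using less.prems by simp
    let ?x = "lo * p + r"
    let ?pieces = "{(i, c). i < q \<and> c < v i \<and> lo + m i \<le> n}"
    have x: "?x \<in> residue_interval p r lo n" using r \<open>lo < n\<close> by (simp add: residue_interval_def)
    have rest: "residue_interval p r lo n - comb_tile_cells p m (?x, i, c) = residue_interval p r (lo + m i) n"
      for i c using p r by (simp add: comb_tile_cells_eq residue_interval_diff)
    have "card (?covers (residue_interval p r lo n))
        = (\<Sum>t\<in>{t \<in> comb_tiles q v. ?x \<in> comb_tile_cells p m t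
              \<and> comb_tile_cells p m t \<subseteq> residue_interval p r lo n}.
            card (?covers (residue_interval p r lo n - comb_tile_cells p m t)))"
      by (rule card_exact_covers_decompose_at_cell[OF nonempty x
            finite_comb_tiles_within[OF finite_residue_interval[OF p] m_pos]])
    also have "\<dots> = (\<Sum>(i, c)\<in>?pieces. card (?covers (residue_interval p r (lo + m i) n)))"
      unfolding comb_tiles_covering_first_cell[OF p r m_pos]
      by (subst sum.reindex) (auto simp: inj_on_def rest intro!: sum.cong)
    also have "\<dots> = (\<Sum>(i, c)\<in>?pieces. s (int (n - (lo + m i))))"
      using m_pos by (intro sum.cong refl) (auto intro!: less.hyps)
    also have "\<dots> = s (int (n - lo))"
      by (rule recurrence_as_sum_over_pieces[OF s_neg s_rec \<open>lo < n\<close>])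
    finally show ?thesis .
  qed
qed

theorem corollary1:
  fixes p q :: nat and m v :: "nat \<Rightarrow> nat" and s :: "int \<Rightarrow> nat"
  assumes "p > 0" and "q > 0"
    and "\<forall>i j. i < j \<and> j < q \<longrightarrow> m i < m j"
    and "\<forall>i < q. m i > 0" and "\<forall>i < q. v i > 0"
    and "\<forall>n < 0. s n = 0"
    and "\<forall>n \<ge> 0. s n = (\<Sum>i<q. v i * s (n - int (m i))) + (if n = 0 then 1 else 0)"
  shows "\<forall>n :: nat. card (comb_tilings p q m v n) = s (int n) ^ p"
proof
  fix n :: nat
  have "card (comb_tilings p q m v n)
      = (\<Prod>r<p. card (exact_covers (comb_tile_cells p m) (comb_tiles q v) (residue_interval p r 0 n)))"
    by (rule card_comb_tilings_eq_prod_residue_classes[OF assms(1,4)])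
  also have "\<dots> = (\<Prod>r<p. s (int n))"
    using card_comb_covers_residue_interval[OF assms(1) _ assms(4,6,7), of _ 0 n] by simp
  finally show "card (comb_tilings p q m v n) = s (int n) ^ p" by simp
qed

end
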